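(* Let $k\ge1$, $j\ge0$, $n=k+j$ and $N\in\mathcal{OC}_{k,j}$. Then $$\sum_{e\in \mathrm{ToT}(N)}A_C(N(e))=(2n+3)A_C(N)+(2n-1).$$
   Context: A (planted, binary) phylogenetic network on a taxon set $X$ with $|X|=n$ is a finite acyclic directed graph with: - a unique root $\rho$ of indegree 0 and outdegree 1; - exactly $n$ nodes of indegree 1 and outdegree 0 (leaves), labeled bijectively by $X$; - every other node is either a tree node (indegree 1, outdegree 2) or a reticulation node (indegree 2, outdegree 1). An edge $(p,q)$ is a tree edge if $q$ is a tree node or a leaf. A network is simplex if the child of every reticulation node is a leaf. A node $u$ is an ancestor of a node $v\neq u$ if some directed path from $\rho$ to $v$ passes through $u$. The ancestor number $\alpha_N(v)$ is the number of ancestors of $v$. The top tree component $C(N)$ of a simplex network $N$ is the set of tree nodes and leaves not descending from any reticulation node. Define $A_C(N)=\sum_{v\in C(N)}\alpha_N(v)$. $\mathrm{ToT}(N)$ is the set of tree edges $(u,v)$ of $N$ with $u$ not a reticulation node, i.e. the tree edges of the top tree component. For $k\ge1$, $j\ge0$, $\mathcal{OC}_{k,j}$ is the set of simplex networks on taxa $\{1,\dots,k+j\}$ with exactly $j$ reticulation nodes, whose children are the leaves $k+1,\dots,k+j$. For $N\in\mathcal{OC}_{k,j}$ and $e=(u,v)\in\mathrm{ToT}(N)$, the network $N(e)$ is obtained from $N$ as follows: - subdivide $e$ into the path $(u,p),(p,q),(q,v)$ with new nodes $p,q$; - add a new reticulation node $r$ with edges $(p,r),(q,r)$; - add a new leaf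 labeled $n+1$ with edge $(r,n+1)$. *)

theory Defs
  imports Main
begin

record 'v network =
  nodes :: "'v set"
  edges :: "('v \<times> 'v) set"
  root :: 'v
  label :: "'v \<Rightarrow> nat"

definition indeg :: "'v network \<Rightarrow> 'v \<Rightarrow> nat" where
  "indeg N v = card {u. (u, v) \<in> edges N}"

definition outdeg :: "'v network \<Rightarrow> 'v \<Rightarrow> nat" where
  "outdeg N v = card {w. (v, w) \<in> edges N}"

definition is_leaf :: "'v network \<Rightarrow> 'v \<Rightarrow> bool" where
  "is_leaf N v \<longleftrightarrow> v \<in> nodes N \<and> indeg N v = 1 \<and> outdeg N v = 0"

definition is_tree_node :: "'v network \<Rightarrow> 'v \<Rightarrow> bool" where
  "is_tree_node N v \<longleftrightarrow> v \<in> nodes N \<and> indeg N v = 1 \<and> outdeg N v = 2"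

definition is_ret :: "'v network \<Rightarrow> 'v \<Rightarrow> bool" where
  "is_ret N v \<longleftrightarrow> v \<in> nodes N \<and> indeg N v = 2 \<and> outdeg N v = 1"

definition leaves :: "'v network \<Rightarrow> 'v set" where
  "leaves N = {v. is_leaf N v}"

definition rets :: "'v network \<Rightarrow> 'v set" where
  "rets N = {v. is_ret N v}"

definition is_network :: "'v network \<Rightarrow> nat \<Rightarrow> bool" where
  "is_network N n \<longleftrightarrow>
     finite (nodes N) \<and> edges N \<subseteq> nodes N \<times> nodes N \<and>
     (\<forall>x. (x, x) \<notin> (edges N)\<^sup>+) \<and>
     root N \<in> nodes N \<and> indeg N (root N) = 0 \<and> outdeg N (root N) = 1 \<and>
     bij_betw (label N) (leaves N) {1..n} \<and>
     (\<forall>v \<in> nodes N. v \<noteq> root N \<longrightarrow> is_leaf N v \<or> is_tree_node N v \<or> is_ret N v)"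

definition simplex :: "'v network \<Rightarrow> bool" where
  "simplex N \<longleftrightarrow> (\<forall>r c. is_ret N r \<and> (r, c) \<in> edges N \<longrightarrow> is_leaf N c)"

definition OC :: "nat \<Rightarrow> nat \<Rightarrow> 'v network set" where
  "OC k j = {N. is_network N (k + j) \<and> simplex N \<and> card (rets N) = j \<and>
     label N ` {c. \<exists>r. is_ret N r \<and> (r, c) \<in> edges N} = {k+1..k+j}}"

definition ancestors :: "'v network \<Rightarrow> 'v \<Rightarrow> 'v set" where
  "ancestors N v = {u. u \<noteq> v \<and> (root N, u) \<in> (edges N)\<^sup>* \<and> (u, v) \<in> (edges N)\<^sup>*}"

definition alpha :: "'v network \<Rightarrow> 'v \<Rightarrow> nat" where
  "alpha N v = card (ancestors N v)"

definition top_comp :: "'v network \<Rightarrow> 'v set" where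
  "top_comp N = {v. (is_tree_node N v \<or> is_leaf N v) \<and>
                    (\<forall>r. is_ret N r \<longrightarrow> r \<notin> ancestors N v)}"

definition A_C :: "'v network \<Rightarrow> nat" where
  "A_C N = (\<Sum>v \<in> top_comp N. alpha N v)"

definition ToT :: "'v network \<Rightarrow> ('v \<times> 'v) set" where
  "ToT N = {(u, v) \<in> edges N. (is_tree_node N v \<or> is_leaf N v) \<and> \<not> is_ret N u}"

text \<open>The network \<open>N(e)\<close> for a network on \<open>n\<close> taxa; new nodes are
 \<open>p = Inr 0\<close>, \<open>q = Inr 1\<close>, \<open>r = Inr 2\<close> and the new leaf \<open>Inr 3\<close> labelled \<open>n+1\<close>.\<close>
definition add_ret :: "'v network \<Rightarrow> nat \<Rightarrow> 'v \<times> 'v \<Rightarrow> ('v + nat) network" where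
  "add_ret N n e =
    (let u = fst e; v = snd e in
     \<lparr> nodes = Inl ` nodes N \<union> {Inr 0, Inr 1, Inr 2, Inr 3},
       edges = map_prod Inl Inl ` (edges N - {(u, v)}) \<union>
               {(Inl u, Inr 0), (Inr 0, Inr 1), (Inr 1, Inl v),
                (Inr 0, Inr 2), (Inr 1, Inr 2), (Inr 2, Inr 3)},
       root = Inl (root N),
       label = (\<lambda>x. case x of Inl w \<Rightarrow> label N w | Inr m \<Rightarrow> (if m = 3 then n + 1 else 0)) \<rparr>)"

end

theory Submission
  imports Defs
begin

text \<open>Subdividing an edge \<open>(u, v)\<close> of the top tree component creates two tree nodes
  \<open>p, q\<close> of the top component with \<open>\<alpha>(p) = \<alpha>(v)\<close> and \<open>\<alpha>(q) = \<alpha>(v) + 1\<close>, raises the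
  ancestor number of every top-component node below \<open>v\<close> by two and leaves the rest of the
  top component unchanged; the new reticulation and its leaf lie outside it. Hence
  \<open>A_C(N(e)) = A_C(N) + 2 d(v) + 2 \<alpha>(v) + 1\<close>, where \<open>d(v)\<close> counts the top-component nodes
  at or below \<open>v\<close>. The edges of \<open>ToT(N)\<close> correspond to their heads, which are exactly the
  nodes of \<open>C(N)\<close>, and by double counting \<open>\<Sum>\<^sub>v d(v) = \<Sum>\<^sub>w \<alpha>(w) = A_C(N)\<close>, because the
  top-component nodes at or above \<open>w\<close> are \<open>w\<close> and its ancestors other than the root.
  Finally, counting degrees in a simplex network with \<open>n\<close> leaves gives \<open>|C(N)| = 2n - 1\<close>.\<close>

lemma rtrancl_hom:
  assumes "\<And>x y. (x, y) \<in> r \<Longrightarrow> (f x, f y) \<in> s\<^sup>*" and "(x, y) \<in> r\<^sup>*"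
  shows "(f x, f y) \<in> s\<^sup>*"
  using assms(2) by induction (auto dest: assms(1) intro: rtrancl_trans)

lemma sum_card_filter_swap:
  assumes "finite A" and "finite B"
  shows "(\<Sum>a\<in>A. card {b \<in> B. P a b}) = (\<Sum>b\<in>B. card {a \<in> A. P a b})"
proof -
  have "(\<Sum>a\<in>A. card {b \<in> B. P a b}) = (\<Sum>a\<in>A. \<Sum>b\<in>B. if P a b then 1 else 0)"
    using assms(2) by (simp add: sum.inter_filter[symmetric])
  also have "\<dots> = (\<Sum>b\<in>B. \<Sum>a\<in>A. if P a b then 1 else 0)"
    by (rule sum.swap)
  also have "\<dots> = (\<Sum>b\<in>B. card {a \<in> A. P a b})"
    using assms(1) by (simp add: sum.inter_filter[symmetric])
  finally show ?thesis .
qed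

lemma sum_indeg_eq_sum_outdeg:
  assumes "finite (nodes N)" and "edges N \<subseteq> nodes N \<times> nodes N"
  shows "(\<Sum>x\<in>nodes N. indeg N x) = (\<Sum>x\<in>nodes N. outdeg N x)"
proof -
  have "finite {w. (x, w) \<in> edges N}" "finite {w. (w, x) \<in> edges N}" for x
    using assms by (auto intro: rev_finite_subset)
  then have "(\<Sum>x\<in>nodes N. outdeg N x) = card (SIGMA x:nodes N. {w. (x, w) \<in> edges N})"
    and "(\<Sum>x\<in>nodes N. indeg N x) = card (SIGMA x:nodes N. {w. (w, x) \<in> edges N})"
    using assms(1) by (simp_all add: outdeg_def indeg_def)
  moreover have "(SIGMA x:nodes N. {w. (x, w) \<in> edges N}) = edges N"
    and "(SIGMA x:nodes N. {w. (w, x) \<in> edges N}) = (edges N)\<inverse>"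
    using assms(2) by auto
  ultimately show ?thesis
    by simp
qed

definition tree_nodes :: "'v network \<Rightarrow> 'v set" where
  "tree_nodes N = {v. is_tree_node N v}"

definition ret_children :: "'v network \<Rightarrow> 'v set" where
  "ret_children N = {c. \<exists>r. is_ret N r \<and> (r, c) \<in> edges N}"

locale phylo_network =
  fixes N :: "'v network" and n :: nat
  assumes is_network: "is_network N n"
begin

abbreviation "V \<equiv> nodes N"
abbreviation "E \<equiv> edges N"
abbreviation "\<rho> \<equiv> root N"

lemma finite_nodes: "finite V"
  and edges_subset: "E \<subseteq> V \<times> V"
  and acyclic_edges: "(x, x) \<notin> E\<^sup>+"
  and root_in_nodes: "\<rho> \<in> V"
  and indeg_root: "indeg N \<rho> = 0"
  and outdeg_root: "outdeg N \<rho> = 1"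
  and bij_label: "bij_betw (label N) (leaves N) {1..n}"
  and node_cases: "x \<in> V \<Longrightarrow> x \<noteq> \<rho> \<Longrightarrow> is_leaf N x \<or> is_tree_node N x \<or> is_ret N x"
  using is_network by (auto simp: is_network_def)

lemma finite_children: "finite {w. (x, w) \<in> E}"
  using finite_nodes edges_subset by (auto intro: rev_finite_subset)

lemma parent_unique: "indeg N x = 1 \<Longrightarrow> (a, x) \<in> E \<Longrightarrow> (b, x) \<in> E \<Longrightarrow> a = b"
  unfolding indeg_def by (metis card_1_singletonE mem_Collect_eq singletonD)

lemma child_unique: "outdeg N x = 1 \<Longrightarrow> (x, a) \<in> E \<Longrightarrow> (x, b) \<in> E \<Longrightarrow> a = b"
  unfolding outdeg_def by (metis card_1_singletonE mem_Collect_eq singletonD)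

lemma parent_exists: "indeg N x \<noteq> 0 \<Longrightarrow> \<exists>a. (a, x) \<in> E"
  unfolding indeg_def by (metis (mono_tags, lifting) Collect_empty_eq card.empty)

lemma child_exists: "outdeg N x \<noteq> 0 \<Longrightarrow> \<exists>b. (x, b) \<in> E"
  unfolding outdeg_def by (metis (mono_tags, lifting) Collect_empty_eq card.empty)

lemma leaf_no_child: "is_leaf N x \<Longrightarrow> (x, y) \<notin> E"
  using finite_children[of x] by (auto simp: is_leaf_def outdeg_def)

lemma node_kinds_disjoint:
  "is_leaf N x \<Longrightarrow> \<not> is_tree_node N x \<and> \<not> is_ret N x"
  "is_tree_node N x \<Longrightarrow> \<not> is_ret N x"
  by (auto simp: is_leaf_def is_tree_node_def is_ret_def)

lemma classified_node_not_root: "is_leaf N x \<or> is_tree_node N x \<or> is_ret N x \<Longrightarrow> x \<noteq> \<rho>"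
  using indeg_root by (auto simp: is_leaf_def is_tree_node_def is_ret_def)

lemma wf_edges: "wf E"
proof -
  have "finite E"
    using finite_nodes edges_subset by (meson finite_SigmaI finite_subset)
  then show ?thesis
    using acyclic_edges by (simp add: wf_iff_acyclic_if_finite acyclic_def)
qed

lemma reachable_from_root: "x \<in> V \<Longrightarrow> (\<rho>, x) \<in> E\<^sup>*"
proof (induction x rule: wf_induct_rule[OF wf_edges])
  case (1 x)
  show ?case
  proof (cases "x = \<rho>")
    case False
    then have "indeg N x \<noteq> 0"
      using node_cases[OF 1(2)] by (auto simp: is_leaf_def is_tree_node_def is_ret_def)
    then obtain a where a: "(a, x) \<in> E"
      using parent_exists by blast
    then have "a \<in> V"
      using edges_subset by auto
    with 1 a show ?thesis
      by (blast intro: rtrancl_into_rtrancl)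
  qed simp
qed

lemma ancestor_trancl: "a \<in> ancestors N w \<Longrightarrow> (a, w) \<in> E\<^sup>+"
  by (auto simp: ancestors_def rtrancl_eq_or_trancl)

lemma finite_ancestors: "finite (ancestors N w)"
proof (rule finite_subset[OF _ finite_nodes])
  show "ancestors N w \<subseteq> V"
    using ancestor_trancl edges_subset by (blast dest: tranclD)
qed

lemma root_ancestor: "w \<in> V \<Longrightarrow> w \<noteq> \<rho> \<Longrightarrow> \<rho> \<in> ancestors N w"
  using reachable_from_root by (simp add: ancestors_def)

lemma ancestors_of_child:
  assumes "indeg N v = 1" and "(u, v) \<in> E"
  shows "ancestors N v = {a. (\<rho>, a) \<in> E\<^sup>* \<and> (a, u) \<in> E\<^sup>*}"
proof (intro set_eqI iffI)
  fix a assume a: "a \<in> ancestors N v"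
  then obtain c where "(a, c) \<in> E\<^sup>*" and "(c, v) \<in> E"
    using ancestor_trancl by (meson tranclD2)
  with assms a show "a \<in> {a. (\<rho>, a) \<in> E\<^sup>* \<and> (a, u) \<in> E\<^sup>*}"
    using parent_unique by (auto simp: ancestors_def)
next
  fix a assume "a \<in> {a. (\<rho>, a) \<in> E\<^sup>* \<and> (a, u) \<in> E\<^sup>*}"
  moreover have "(v, v) \<notin> E\<^sup>+"
    by (rule acyclic_edges)
  ultimately show "a \<in> ancestors N v"
    using assms(2) by (auto simp: ancestors_def intro: rtrancl_into_rtrancl rtrancl_into_trancl1)
qed

lemma nodes_partition: "V = insert \<rho> (leaves N \<union> tree_nodes N \<union> rets N)"
  using node_cases root_in_nodes
  by (auto simp: leaves_def tree_nodes_def rets_def is_leaf_def is_tree_node_def is_ret_def)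

text \<open>Both sides count the edges: the left one by heads, the right one by tails.\<close>
lemma card_tree_nodes: "card (tree_nodes N) + 1 = card (leaves N) + card (rets N)"
proof -
  have fin: "finite (leaves N)" "finite (tree_nodes N)" "finite (rets N)"
    using finite_nodes nodes_partition by (metis finite_Un finite_insert)+
  have "leaves N \<inter> tree_nodes N = {}" "(leaves N \<union> tree_nodes N) \<inter> rets N = {}"
    and "\<rho> \<notin> leaves N \<union> tree_nodes N \<union> rets N"
    using node_kinds_disjoint classified_node_not_root by (auto simp: leaves_def tree_nodes_def rets_def)
  then have split: "(\<Sum>x\<in>V. f x) = f \<rho> + (\<Sum>x\<in>leaves N. f x) + (\<Sum>x\<in>tree_nodes N. f x)
      + (\<Sum>x\<in>rets N. f x)" for f :: "'v \<Rightarrow> nat"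
    by (subst nodes_partition) (simp add: fin sum.union_disjoint)
  have "(\<Sum>x\<in>V. indeg N x) = (\<Sum>x\<in>V. outdeg N x)"
    using finite_nodes edges_subset by (rule sum_indeg_eq_sum_outdeg)
  then show ?thesis
    unfolding split using indeg_root outdeg_root
    by (simp add: leaves_def tree_nodes_def rets_def is_leaf_def is_tree_node_def is_ret_def)
qed

lemma card_leaves: "card (leaves N) = n"
  using bij_betw_same_card[OF bij_label] by simp

end

locale simplex_network = phylo_network +
  assumes simplex: "simplex N"
begin

lemma ret_descendant:
  assumes "is_ret N r" and "(r, x) \<in> E\<^sup>+"
  shows "(r, x) \<in> E \<and> is_leaf N x"
  using assms(2)
proof (induction x rule: trancl_induct)
  case (base x)
  then show ?case
    using assms(1) simplex by (auto simp: simplex_def)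
next
  case (step x y)
  then show ?case
    using leaf_no_child by blast
qed

lemma ret_children_subset_leaves: "ret_children N \<subseteq> leaves N"
  using simplex by (auto simp: simplex_def ret_children_def leaves_def)

text \<open>Both projections are injective on the edges leaving reticulations: a reticulation
  has one child, and that child is a leaf with one parent.\<close>
lemma card_ret_children: "card (ret_children N) = card (rets N)"
proof -
  define F where "F = {e \<in> E. is_ret N (fst e)}"
  have "inj_on fst F"
    using child_unique by (fastforce simp: F_def is_ret_def intro: inj_onI)
  moreover have "inj_on snd F"
    using simplex parent_unique by (fastforce simp: F_def simplex_def is_leaf_def intro: inj_onI)
  moreover have "fst ` F = rets N"
    using child_exists by (fastforce simp: F_def rets_def is_ret_def image_iff)
  moreover have "snd ` F = ret_children N"
    by (force simp: F_def ret_children_def image_iff)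
  ultimately show ?thesis
    by (metis card_image)
qed

lemma top_comp_eq: "top_comp N = tree_nodes N \<union> (leaves N - ret_children N)"
proof (intro set_eqI iffI)
  fix x assume x: "x \<in> top_comp N"
  show "x \<in> tree_nodes N \<union> (leaves N - ret_children N)"
  proof (cases "is_tree_node N x")
    case False
    then have leaf: "is_leaf N x"
      using x by (auto simp: top_comp_def)
    have "x \<notin> ret_children N"
    proof
      assume "x \<in> ret_children N"
      then obtain r where r: "is_ret N r" "(r, x) \<in> E"
        by (auto simp: ret_children_def)
      then have "r \<in> ancestors N x"
        using reachable_from_root leaf node_kinds_disjoint
        by (auto simp: ancestors_def is_ret_def)
      with r x show False
        by (auto simp: top_comp_def)
    qed
    with leaf show ?thesis
      by (simp add: leaves_def)
  qed (simp add: tree_nodes_def)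
next
  fix x assume x: "x \<in> tree_nodes N \<union> (leaves N - ret_children N)"
  have "r \<notin> ancestors N x" if "is_ret N r" for r
  proof
    assume "r \<in> ancestors N x"
    then have "(r, x) \<in> E \<and> is_leaf N x"
      using that ret_descendant ancestor_trancl by blast
    with that x show False
      using node_kinds_disjoint by (auto simp: tree_nodes_def leaves_def ret_children_def)
  qed
  with x show "x \<in> top_comp N"
    by (auto simp: top_comp_def tree_nodes_def leaves_def)
qed

lemma finite_top_comp: "finite (top_comp N)"
  using finite_nodes by (auto simp: top_comp_def is_tree_node_def is_leaf_def intro: rev_finite_subset)

lemma card_top_comp: "card (top_comp N) = 2 * n - 1"
proof -
  have fin: "finite (leaves N)" "finite (tree_nodes N)"
    using finite_nodes by (auto simp: leaves_def tree_nodes_def is_leaf_def is_tree_node_def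
        intro: rev_finite_subset)
  have "tree_nodes N \<inter> (leaves N - ret_children N) = {}"
    using node_kinds_disjoint by (auto simp: tree_nodes_def leaves_def)
  then have "card (top_comp N) = card (tree_nodes N) + card (leaves N - ret_children N)"
    unfolding top_comp_eq using fin by (simp add: card_Un_disjoint)
  moreover have "card (leaves N - ret_children N) = card (leaves N) - card (ret_children N)"
    using ret_children_subset_leaves fin by (meson card_Diff_subset rev_finite_subset)
  moreover have "card (ret_children N) \<le> card (leaves N)"
    using ret_children_subset_leaves fin(1) by (rule card_mono[rotated])
  ultimately show ?thesis
    using card_tree_nodes card_leaves card_ret_children by simp
qed

lemma ToT_eq: "ToT N = {e \<in> E. snd e \<in> top_comp N}"
proof (intro set_eqI iffI; clarify)
  fix u w assume uw: "(u, w) \<in> ToT N"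
  have "r \<notin> ancestors N w" if r: "is_ret N r" for r
  proof
    assume "r \<in> ancestors N w"
    then have "(r, w) \<in> E"
      using r ret_descendant ancestor_trancl by blast
    moreover have "indeg N w = 1"
      using uw by (auto simp: ToT_def is_tree_node_def is_leaf_def)
    ultimately have "r = u"
      using uw parent_unique by (auto simp: ToT_def)
    with r uw show False
      by (simp add: ToT_def)
  qed
  with uw show "(u, w) \<in> E \<and> snd (u, w) \<in> top_comp N"
    by (auto simp: ToT_def top_comp_def)
next
  fix u w assume "(u, w) \<in> E" "snd (u, w) \<in> top_comp N"
  moreover have "(w, w) \<notin> E\<^sup>+"
    by (rule acyclic_edges)
  ultimately have "u \<in> ancestors N w" "w \<in> top_comp N" "(u, w) \<in> E"
    using reachable_from_root edges_subset by (auto simp: ancestors_def)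
  then show "(u, w) \<in> ToT N"
    by (auto simp: ToT_def top_comp_def)
qed

lemma bij_betw_ToT_top_comp: "bij_betw snd (ToT N) (top_comp N)"
proof (rule bij_betw_imageI)
  have indeg: "indeg N w = 1" if "w \<in> top_comp N" for w
    using that by (auto simp: top_comp_def is_tree_node_def is_leaf_def)
  then show "inj_on snd (ToT N)"
    unfolding ToT_eq using parent_unique by (fastforce intro: inj_onI)
  show "snd ` ToT N = top_comp N"
    unfolding ToT_eq using indeg parent_exists by (force simp: image_iff)
qed

lemma top_comp_above:
  assumes "w \<in> top_comp N"
  shows "{a \<in> top_comp N. (a, w) \<in> E\<^sup>*} = insert w (ancestors N w - {\<rho>})"
proof (intro set_eqI iffI)
  fix a assume "a \<in> {a \<in> top_comp N. (a, w) \<in> E\<^sup>*}"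
  then show "a \<in> insert w (ancestors N w - {\<rho>})"
    using reachable_from_root classified_node_not_root
    by (auto simp: top_comp_def ancestors_def is_tree_node_def is_leaf_def)
next
  fix a assume a: "a \<in> insert w (ancestors N w - {\<rho>})"
  show "a \<in> {a \<in> top_comp N. (a, w) \<in> E\<^sup>*}"
  proof (cases "a = w")
    case False
    with a have anc: "a \<in> ancestors N w" and "a \<noteq> \<rho>"
      by auto
    obtain b where "(a, b) \<in> E"
      using ancestor_trancl[OF anc] by (meson tranclD)
    then have "a \<in> V" and "\<not> is_leaf N a"
      using edges_subset leaf_no_child by auto
    moreover have "\<not> is_ret N a"
      using anc assms by (auto simp: top_comp_def)
    ultimately have "a \<in> tree_nodes N"
      using node_cases \<open>a \<noteq> \<rho>\<close> by (auto simp: tree_nodes_def)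
    with anc show ?thesis
      by (auto simp: top_comp_eq ancestors_def)
  qed (use assms in auto)
qed

lemma card_top_comp_above:
  assumes "w \<in> top_comp N"
  shows "card {a \<in> top_comp N. (a, w) \<in> E\<^sup>*} = alpha N w"
proof -
  have "w \<in> V" "w \<noteq> \<rho>"
    using assms classified_node_not_root by (auto simp: top_comp_def is_tree_node_def is_leaf_def)
  then have "\<rho> \<in> ancestors N w"
    by (rule root_ancestor)
  moreover have "w \<notin> ancestors N w"
    by (simp add: ancestors_def)
  ultimately have "card (insert w (ancestors N w - {\<rho>})) = card (ancestors N w)"
    using finite_ancestors[of w] by (metis card.remove card_insert_disjoint finite_Diff Diff_iff)
  then show ?thesis
    unfolding top_comp_above[OF assms] alpha_def .
qed

lemma sum_card_top_comp_below: "(\<Sum>v\<in>top_comp N. card {w \<in> top_comp N. (v, w) \<in> E\<^sup>*}) = A_C N"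
proof -
  have "(\<Sum>v\<in>top_comp N. card {w \<in> top_comp N. (v, w) \<in> E\<^sup>*})
      = (\<Sum>w\<in>top_comp N. card {v \<in> top_comp N. (v, w) \<in> E\<^sup>*})"
    using finite_top_comp finite_top_comp by (rule sum_card_filter_swap)
  also have "\<dots> = A_C N"
    unfolding A_C_def by (rule sum.cong) (simp_all add: card_top_comp_above)
  finally show ?thesis .
qed

end

locale ToT_subdivision = simplex_network N n for N :: "'v network" and n +
  fixes u v :: 'v
  assumes ToT_edge: "(u, v) \<in> ToT N"
begin

abbreviation "N' \<equiv> add_ret N n (u, v)"
abbreviation "E' \<equiv> edges N'"

lemma edge_uv: "(u, v) \<in> E"
  using ToT_edge by (simp add: ToT_def)

lemma u_in_nodes: "u \<in> V"
  using edge_uv edges_subset by auto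

lemma v_in_top_comp: "v \<in> top_comp N"
  using ToT_edge by (simp add: ToT_eq)

lemma indeg_v: "indeg N v = 1"
  using v_in_top_comp by (auto simp: top_comp_def is_tree_node_def is_leaf_def)

lemma not_reach_v_u: "(v, u) \<notin> E\<^sup>*"
  using edge_uv acyclic_edges by (meson rtrancl_into_trancl1)

lemma edges'_Inl_Inl [simp]: "(Inl a, Inl b) \<in> E' \<longleftrightarrow> (a, b) \<in> E \<and> (a, b) \<noteq> (u, v)"
  and edges'_Inl_Inr [simp]: "(Inl a, Inr m) \<in> E' \<longleftrightarrow> a = u \<and> m = 0"
  and edges'_Inr_Inl [simp]: "(Inr m, Inl b) \<in> E' \<longleftrightarrow> m = 1 \<and> b = v"
  and edges'_Inr_Inr [simp]: "(Inr m, Inr m') \<in> E' \<longleftrightarrow> (m, m') \<in> {(0, 1), (0, 2), (1, 2), (2, 3)}"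
  and nodes'_Inl [simp]: "Inl a \<in> nodes N' \<longleftrightarrow> a \<in> V"
  and nodes'_Inr [simp]: "Inr m \<in> nodes N' \<longleftrightarrow> m \<le> 3"
  and root' [simp]: "root N' = Inl \<rho>"
  by (auto simp: add_ret_def)

lemma children'_Inl:
  "{y. (Inl w, y) \<in> E'} = (\<lambda>b. if w = u \<and> b = v then Inr 0 else Inl b) ` {b. (w, b) \<in> E}"
proof (intro set_eqI)
  fix y
  show "y \<in> {y. (Inl w, y) \<in> E'} \<longleftrightarrow>
      y \<in> (\<lambda>b. if w = u \<and> b = v then Inr 0 else Inl b) ` {b. (w, b) \<in> E}"
    using edge_uv by (cases y) (auto simp: image_iff)
qed

lemma parents'_Inl:
  "{x. (x, Inl w) \<in> E'} = (\<lambda>a. if a = u \<and> w = v then Inr 1 else Inl a) ` {a. (a, w) \<in> E}"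
proof (intro set_eqI)
  fix x
  show "x \<in> {x. (x, Inl w) \<in> E'} \<longleftrightarrow>
      x \<in> (\<lambda>a. if a = u \<and> w = v then Inr 1 else Inl a) ` {a. (a, w) \<in> E}"
    using edge_uv by (cases x) (auto simp: image_iff)
qed

lemma outdeg'_Inl [simp]: "outdeg N' (Inl w) = outdeg N w"
  unfolding outdeg_def children'_Inl by (rule card_image) (auto intro: inj_onI split: if_splits)

lemma indeg'_Inl [simp]: "indeg N' (Inl w) = indeg N w"
  unfolding indeg_def parents'_Inl by (rule card_image) (auto intro: inj_onI split: if_splits)

lemma parents'_Inr: "{x. (x, Inr m) \<in> E'} =
    (if m = 0 then {Inl u} else if m = 1 then {Inr 0} else if m = 2 then {Inr 0, Inr 1}
     else if m = 3 then {Inr 2} else {})"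
proof (intro set_eqI)
  fix x show "x \<in> {x. (x, Inr m) \<in> E'} \<longleftrightarrow> x \<in> (if m = 0 then {Inl u} else if m = 1 then {Inr 0}
      else if m = 2 then {Inr 0, Inr 1} else if m = 3 then {Inr 2} else {})"
    by (cases x) auto
qed

lemma children'_Inr: "{y. (Inr m, y) \<in> E'} =
    (if m = 0 then {Inr 1, Inr 2} else if m = 1 then {Inl v, Inr 2} else if m = 2 then {Inr 3} else {})"
proof (intro set_eqI)
  fix y show "y \<in> {y. (Inr m, y) \<in> E'} \<longleftrightarrow> y \<in> (if m = 0 then {Inr 1, Inr 2}
      else if m = 1 then {Inl v, Inr 2} else if m = 2 then {Inr 3} else {})"
    by (cases y) auto
qed

lemma is_tree_node'_Inl [simp]: "is_tree_node N' (Inl w) \<longleftrightarrow> is_tree_node N w"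
  and is_leaf'_Inl [simp]: "is_leaf N' (Inl w) \<longleftrightarrow> is_leaf N w"
  and is_ret'_Inl [simp]: "is_ret N' (Inl w) \<longleftrightarrow> is_ret N w"
  by (simp_all add: is_tree_node_def is_leaf_def is_ret_def)

lemma is_tree_node'_Inr [simp]: "is_tree_node N' (Inr m) \<longleftrightarrow> m \<le> 1"
  and is_leaf'_Inr [simp]: "is_leaf N' (Inr m) \<longleftrightarrow> m = 3"
  and is_ret'_Inr [simp]: "is_ret N' (Inr m) \<longleftrightarrow> m = 2"
  by (auto simp: is_tree_node_def is_leaf_def is_ret_def indeg_def outdeg_def
      parents'_Inr children'_Inr)

lemma reach'_lift: "(a, b) \<in> E\<^sup>* \<Longrightarrow> (Inl a, Inl b) \<in> E'\<^sup>*"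
proof (rule rtrancl_hom[where r = E])
  fix x y assume xy: "(x, y) \<in> E"
  show "(Inl x, Inl y) \<in> E'\<^sup>*"
  proof (cases "(x, y) = (u, v)")
    case True
    have "(Inl u, Inr 0) \<in> E'" "(Inr 0, Inr 1) \<in> E'" "(Inr 1, Inl v) \<in> E'"
      by simp_all
    then have "(Inl u, Inl v) \<in> E'\<^sup>*"
      by (meson converse_rtrancl_into_rtrancl r_into_rtrancl)
    with True show ?thesis
      by simp
  qed (use xy in auto)
qed

lemma reach'_collapse:
  assumes "(x, y) \<in> E'\<^sup>*"
  shows "(case_sum id (\<lambda>_. u) x, case_sum id (\<lambda>_. u) y) \<in> E\<^sup>*"
    and "(case_sum id (\<lambda>_. v) x, case_sum id (\<lambda>_. v) y) \<in> E\<^sup>*"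
proof -
  have "(case_sum id (\<lambda>_. c) x, case_sum id (\<lambda>_. c) y) \<in> E\<^sup>*" if "c = u \<or> c = v" for c
  proof (rule rtrancl_hom[OF _ assms])
    fix x y assume "(x, y) \<in> E'"
    with that edge_uv show "(case_sum id (\<lambda>_. c) x, case_sum id (\<lambda>_. c) y) \<in> E\<^sup>*"
      by (cases x; cases y) auto
  qed
  then show "(case_sum id (\<lambda>_. u) x, case_sum id (\<lambda>_. u) y) \<in> E\<^sup>*"
    and "(case_sum id (\<lambda>_. v) x, case_sum id (\<lambda>_. v) y) \<in> E\<^sup>*"
    by blast+
qed

lemma reach'_Inl_Inl: "(Inl a, Inl b) \<in> E'\<^sup>* \<longleftrightarrow> (a, b) \<in> E\<^sup>*"
  using reach'_lift reach'_collapse(1)[of "Inl a" "Inl b"] by auto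

lemma reach'_Inl_Inr:
  assumes "m \<le> 1"
  shows "(Inl a, Inr m) \<in> E'\<^sup>* \<longleftrightarrow> (a, u) \<in> E\<^sup>*"
proof
  assume "(Inl a, Inr m) \<in> E'\<^sup>*"
  then show "(a, u) \<in> E\<^sup>*"
    using reach'_collapse(1) by fastforce
next
  assume "(a, u) \<in> E\<^sup>*"
  then have "(Inl a, Inr 0) \<in> E'\<^sup>*"
    by (rule rtrancl_into_rtrancl[OF reach'_lift]) simp
  with assms show "(Inl a, Inr m) \<in> E'\<^sup>*"
    by (cases m) (auto intro: rtrancl_into_rtrancl)
qed

lemma reach'_Inr_Inl:
  assumes "m \<le> 1"
  shows "(Inr m, Inl b) \<in> E'\<^sup>* \<longleftrightarrow> (v, b) \<in> E\<^sup>*"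
proof
  assume "(Inr m, Inl b) \<in> E'\<^sup>*"
  then show "(v, b) \<in> E\<^sup>*"
    using reach'_collapse(2) by fastforce
next
  assume "(v, b) \<in> E\<^sup>*"
  then have "(Inr 1, Inl b) \<in> E'\<^sup>*"
    by (rule converse_rtrancl_into_rtrancl[rotated, OF reach'_lift]) simp
  with assms show "(Inr m, Inl b) \<in> E'\<^sup>*"
    by (cases m) (auto intro: converse_rtrancl_into_rtrancl[of "Inr 0" "Inr 1"])
qed

lemma reach'_from_ret: "(Inr m, y) \<in> E'\<^sup>* \<Longrightarrow> 2 \<le> m \<Longrightarrow> y \<in> Inr ` {2..}"
proof (induction y rule: rtrancl_induct)
  case (step y z)
  then show ?case
    by (cases z) auto
qed auto

lemma not_reach'_Inr1_Inr0: "(Inr 1, Inr 0) \<notin> E'\<^sup>*"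
proof
  assume "(Inr 1, Inr 0) \<in> E'\<^sup>*"
  then have "(Inr 1, Inr 0) \<in> E'\<^sup>+"
    by (simp add: rtrancl_eq_or_trancl)
  then obtain y where "(Inr 1, y) \<in> E'\<^sup>*" and "(y, Inr 0) \<in> E'"
    by (meson tranclD2)
  moreover from this(2) have "y = Inl u"
    by (cases y) auto
  ultimately have "(v, u) \<in> E\<^sup>*"
    using reach'_collapse(2) by fastforce
  with not_reach_v_u show False ..
qed

lemma ancestors'_Inl:
  "ancestors N' (Inl w) = Inl ` ancestors N w \<union> (if (v, w) \<in> E\<^sup>* then {Inr 0, Inr 1} else {})"
proof (intro set_eqI)
  fix x
  show "x \<in> ancestors N' (Inl w) \<longleftrightarrow>
      x \<in> Inl ` ancestors N w \<union> (if (v, w) \<in> E\<^sup>* then {Inr 0, Inr 1} else {})"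
  proof (cases x)
    case (Inr m)
    have "(Inl \<rho>, Inr m) \<in> E'\<^sup>*" if "m \<le> 1"
      using that reach'_Inl_Inr reachable_from_root u_in_nodes by blast
    moreover have "(Inr m, Inl w) \<notin> E'\<^sup>*" if "\<not> m \<le> 1"
      using that reach'_from_ret by fastforce
    ultimately show ?thesis
      using Inr reach'_Inr_Inl by (auto simp: ancestors_def)
  qed (auto simp: ancestors_def reach'_Inl_Inl)
qed

lemma ancestors'_Inr0: "ancestors N' (Inr 0) = Inl ` ancestors N v"
proof (intro set_eqI)
  fix x
  show "x \<in> ancestors N' (Inr 0) \<longleftrightarrow> x \<in> Inl ` ancestors N v"
  proof (cases x)
    case (Inl a)
    then show ?thesis
      using reach'_Inl_Inr[of 0] ancestors_of_child[OF indeg_v edge_uv]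
      by (auto simp: ancestors_def reach'_Inl_Inl)
  next
    case (Inr m)
    then show ?thesis
      using not_reach'_Inr1_Inr0 reach'_from_ret[of m "Inr 0"]
      by (cases "m \<le> 1") (auto simp: ancestors_def le_Suc_eq)
  qed
qed

lemma ancestors'_Inr1: "ancestors N' (Inr 1) = insert (Inr 0) (Inl ` ancestors N v)"
proof (intro set_eqI)
  fix x
  show "x \<in> ancestors N' (Inr 1) \<longleftrightarrow> x \<in> insert (Inr 0) (Inl ` ancestors N v)"
  proof (cases x)
    case (Inl a)
    then show ?thesis
      using reach'_Inl_Inr[of 1] ancestors_of_child[OF indeg_v edge_uv]
      by (auto simp: ancestors_def reach'_Inl_Inl)
  next
    case (Inr m)
    have "(Inl \<rho>, Inr 0) \<in> E'\<^sup>*"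
      using reach'_Inl_Inr reachable_from_root u_in_nodes by blast
    then show ?thesis
      using Inr reach'_from_ret[of m "Inr 1"]
      by (cases "m \<le> 1") (auto simp: ancestors_def le_Suc_eq)
  qed
qed

lemma ret_ancestor_of_new_leaf: "Inr 2 \<in> ancestors N' (Inr 3)"
proof -
  have "(Inl \<rho>, Inr 0) \<in> E'\<^sup>*"
    using reach'_Inl_Inr reachable_from_root u_in_nodes by blast
  then show ?thesis
    by (auto simp: ancestors_def intro: rtrancl_into_rtrancl)
qed

lemma top_comp'_Inl: "Inl w \<in> top_comp N' \<longleftrightarrow> w \<in> top_comp N"
proof -
  have "(\<forall>r. is_ret N' r \<longrightarrow> r \<notin> ancestors N' (Inl w)) \<longleftrightarrow>
      (\<forall>r. is_ret N r \<longrightarrow> r \<notin> ancestors N w)"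
    by (auto simp: split_sum_all ancestors'_Inl)
  then show ?thesis
    by (simp add: top_comp_def)
qed

lemma top_comp'_Inr01: "Inr 0 \<in> top_comp N'" "Inr 1 \<in> top_comp N'"
proof -
  have "\<not> is_ret N' r" if "r \<in> Inl ` ancestors N v" for r
    using that v_in_top_comp by (auto simp: top_comp_def)
  then have "\<forall>r. is_ret N' r \<longrightarrow> r \<notin> ancestors N' (Inr 0)"
    and "\<forall>r. is_ret N' r \<longrightarrow> r \<notin> ancestors N' (Inr 1)"
    unfolding ancestors'_Inr0 ancestors'_Inr1 by auto
  then show "Inr 0 \<in> top_comp N'" "Inr 1 \<in> top_comp N'"
    by (simp_all add: top_comp_def)
qed

lemma top_comp'_Inr_ge2: "2 \<le> m \<Longrightarrow> Inr m \<notin> top_comp N'"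
  using ret_ancestor_of_new_leaf by (auto simp: top_comp_def intro!: exI[of _ "Inr 2"])

lemma top_comp': "top_comp N' = Inl ` top_comp N \<union> {Inr 0, Inr 1}"
proof (intro set_eqI)
  fix x show "x \<in> top_comp N' \<longleftrightarrow> x \<in> Inl ` top_comp N \<union> {Inr 0, Inr 1}"
  proof (cases x)
    case (Inr m)
    consider "m = 0" | "m = 1" | "2 \<le> m"
      by linarith
    then show ?thesis
      using Inr top_comp'_Inr01 top_comp'_Inr_ge2 by cases auto
  qed (auto simp: top_comp'_Inl)
qed

lemma alpha'_Inl: "alpha N' (Inl w) = alpha N w + (if (v, w) \<in> E\<^sup>* then 2 else 0)"
  unfolding alpha_def ancestors'_Inl using finite_ancestors[of w]
  by (simp add: card_image card_insert_if image_iff)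

lemma alpha'_Inr0: "alpha N' (Inr 0) = alpha N v"
  unfolding alpha_def ancestors'_Inr0 by (simp add: card_image)

lemma alpha'_Inr1: "alpha N' (Inr 1) = alpha N v + 1"
  unfolding alpha_def ancestors'_Inr1 using finite_ancestors[of v]
  by (simp add: card_image image_iff)

lemma A_C_add_ret:
  "A_C N' = A_C N + 2 * card {w \<in> top_comp N. (v, w) \<in> E\<^sup>*} + 2 * alpha N v + 1"
proof -
  have "A_C N' = alpha N' (Inr 0) + alpha N' (Inr 1) + (\<Sum>w\<in>top_comp N. alpha N' (Inl w))"
    unfolding A_C_def top_comp' using finite_top_comp
    by (simp add: sum.reindex image_iff)
  also have "alpha N' (Inr 0) = alpha N v"
    by (rule alpha'_Inr0)
  also have "alpha N' (Inr 1) = alpha N v + 1"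
    by (rule alpha'_Inr1)
  also have "(\<Sum>w\<in>top_comp N. alpha N' (Inl w))
      = A_C N + (\<Sum>w\<in>top_comp N. if (v, w) \<in> E\<^sup>* then 2 else 0)"
    by (simp add: alpha'_Inl sum.distrib A_C_def)
  also have "(\<Sum>w\<in>top_comp N. if (v, w) \<in> E\<^sup>* then 2 else 0)
      = 2 * card {w \<in> top_comp N. (v, w) \<in> E\<^sup>*}"
    using finite_top_comp by (simp add: sum.inter_filter[symmetric])
  finally show ?thesis
    by simp
qed

end

context simplex_network
begin

lemma sum_A_C_add_ret:
  "(\<Sum>e\<in>ToT N. A_C (add_ret N n e)) = card (top_comp N) * (A_C N + 1) + 4 * A_C N"
proof -
  define d where "d w = card {x \<in> top_comp N. (w, x) \<in> E\<^sup>*}" for w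
  have "A_C (add_ret N n e) = A_C N + 1 + 2 * d (snd e) + 2 * alpha N (snd e)"
    if "e \<in> ToT N" for e
  proof -
    interpret ToT_subdivision N n "fst e" "snd e"
      using that by unfold_locales simp
    show ?thesis
      using A_C_add_ret by (simp add: d_def)
  qed
  then have "(\<Sum>e\<in>ToT N. A_C (add_ret N n e))
      = (\<Sum>e\<in>ToT N. A_C N + 1 + 2 * d (snd e) + 2 * alpha N (snd e))"
    by (rule sum.cong[OF refl])
  also have "\<dots> = (\<Sum>w\<in>top_comp N. A_C N + 1 + 2 * d w + 2 * alpha N w)"
    by (rule sum.reindex_bij_betw[OF bij_betw_ToT_top_comp])
  also have "\<dots> = card (top_comp N) * (A_C N + 1) + 2 * (\<Sum>w\<in>top_comp N. d w)
      + 2 * (\<Sum>w\<in>top_comp N. alpha N w)"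
    by (simp only: sum.distrib sum_distrib_left[symmetric] sum_constant of_nat_id) simp
  also have "\<dots> = card (top_comp N) * (A_C N + 1) + 4 * A_C N"
    using sum_card_top_comp_below by (simp add: d_def A_C_def)
  finally show ?thesis .
qed

end

theorem mainTheorem6:
  fixes N :: "'v network" and k j n :: nat
  assumes "k \<ge> 1" and "n = k + j" and "N \<in> OC k j"
  shows "(\<Sum>e \<in> ToT N. A_C (add_ret N n e)) = (2 * n + 3) * A_C N + (2 * n - 1)"
proof -
  interpret simplex_network N n
    using assms(2,3) by unfold_locales (simp_all add: OC_def)
  define c where "c = 2 * n - 1"
  have coeff: "2 * n + 3 = c + 4"
    using assms(1,2) by (simp add: c_def)
  show ?thesis
    unfolding sum_A_C_add_ret card_top_comp c_def[symmetric] coeff by (simp add: algebra_simps)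
qed

end
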